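(* For arbitrary positive integers $m$ and $n$, there exist a finite alphabet $A$, a letter $a\in A$, and languages $K,L\subseteq A^*$ whose syntactic monoids $M$ and $N$ satisfy $|M|=m$ and $|N|=n$, such that, taking $\varphi:A^*\to M$, $u\mapsto u{\sim}_K$ and $\psi:A^*\to N$, $u\mapsto u{\sim}_L$ to be the syntactic homomorphisms, the mapping $\mu_a:A^*\to M\Diamond N$ is surjective.
   Context: The syntactic congruence of $R\subseteq A^*$ is $u\sim_R v$ iff for all $p,q\in A^*$, $puq\in R\Leftrightarrow pvq\in R$; the syntactic monoid is $A^*/{\sim_R}$. For finite monoids $M,N$, the Schützenberger product $M\Diamond N$ is the set of $2\times2$ matrices $P$ with $P_{1,1}\in M$, $P_{2,2}\in N$, $P_{2,1}=\emptyset$, $P_{1,2}\subseteq M\times N$, with multiplication $(PQ)_{1,1}=P_{1,1}Q_{1,1}$, $(PQ)_{2,2}=P_{2,2}Q_{2,2}$, $(PQ)_{1,2}=\{(P_{1,1}x,y)\mid (x,y)\in Q_{1,2}\}\cup\{(z,tQ_{2,2})\mid (z,t)\in P_{1,2}\}$. Given homomorphisms $\varphi:A^*\to M$, $\psi:A^*\to N$ and $a\in A$, the homomorphism $\mu_a:A^*\to M\Diamond N$ is defined by $(\mu_a(u))_{1,1}=\varphi(u)$, $(\mu_a(u))_{2,2}=\psi(u)$, $(\mu_a(u))_{1,2}=\{(\varphi(u'),\psi(u''))\mid u=u'au'',\ u',u''\in A^*\}$. *)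

theory Defs
  imports Main
begin

definition synt_equiv :: "'a set \<Rightarrow> 'a list set \<Rightarrow> 'a list \<Rightarrow> 'a list \<Rightarrow> bool" where
  "synt_equiv A R u v \<longleftrightarrow>
     (\<forall>p\<in>lists A. \<forall>q\<in>lists A. p @ u @ q \<in> R \<longleftrightarrow> p @ v @ q \<in> R)"

definition synt_hom :: "'a set \<Rightarrow> 'a list set \<Rightarrow> 'a list \<Rightarrow> 'a list set" where
  "synt_hom A R u = {v \<in> lists A. synt_equiv A R u v}"

definition synt_monoid :: "'a set \<Rightarrow> 'a list set \<Rightarrow> 'a list set set" where
  "synt_monoid A R = synt_hom A R ` lists A"

text \<open>Schuetzenberger product of M and N: triples (P11, P12, P22) standing for the
  matrix with P21 empty.\<close>
definition schutz_carrier :: "'m set \<Rightarrow> 'n set \<Rightarrow> ('m \<times> ('m \<times> 'n) set \<times> 'n) set" where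
  "schutz_carrier M N = {(x, S, y). x \<in> M \<and> y \<in> N \<and> S \<subseteq> M \<times> N}"

definition schutz_mult ::
  "('m \<Rightarrow> 'm \<Rightarrow> 'm) \<Rightarrow> ('n \<Rightarrow> 'n \<Rightarrow> 'n) \<Rightarrow>
   ('m \<times> ('m \<times> 'n) set \<times> 'n) \<Rightarrow> ('m \<times> ('m \<times> 'n) set \<times> 'n) \<Rightarrow> ('m \<times> ('m \<times> 'n) set \<times> 'n)" where
  "schutz_mult mM mN P Q = (case P of (p11, p12, p22) \<Rightarrow> case Q of (q11, q12, q22) \<Rightarrow>
     (mM p11 q11,
      {(mM p11 x, y) | x y. (x, y) \<in> q12} \<union> {(z, mN t q22) | z t. (z, t) \<in> p12},
      mN p22 q22))"

definition mu :: "('a list \<Rightarrow> 'm) \<Rightarrow> ('a list \<Rightarrow> 'n) \<Rightarrow> 'a \<Rightarrow> 'a list \<Rightarrow> ('m \<times> ('m \<times> 'n) set \<times> 'n)" where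
  "mu \<phi> \<psi> a u = (\<phi> u, {(\<phi> u', \<psi> u'') | u' u''. u = u' @ a # u''}, \<psi> u)"

end

theory Submission
  imports Defs
begin

text \<open>Over the alphabet \<open>{0, 1, 2}\<close> take for \<open>K\<close> the words whose number of 1s is
  divisible by \<open>m\<close>, and for \<open>L\<close> those whose number of 2s is divisible by \<open>n\<close>; their
  syntactic monoids are the cyclic groups of orders \<open>m\<close> and \<open>n\<close>, and \<open>\<phi>\<close>, \<open>\<psi>\<close>
  just count 1s resp. 2s. For \<open>a = 0\<close> the middle entry of \<open>\<mu>\<^sub>a(w)\<close> records, for every
  occurrence of 0, the number of 1s before it and of 2s after it. The block
  \<open>2^(n-q) 1^p 0 2^q 1^(m-p)\<close> contributes exactly the pair \<open>(p, q)\<close> and acts trivially on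
  both counts, so concatenating one block per pair of a prescribed set, framed by
  \<open>2^y\<close> and \<open>1^x\<close>, realises every element of \<open>M \<Diamond> N\<close>.\<close>

lemma add_complement_mod_eq_0_iff:
  fixes c r m :: nat
  assumes "r < m"
  shows "(c + (m - r)) mod m = 0 \<longleftrightarrow> c mod m = r"
proof -
  have "(c + (m - r)) mod m = (c mod m + (m - r)) mod m"
    by (simp add: mod_add_left_eq)
  moreover have "c mod m < m" using assms by simp
  ultimately show ?thesis using assms
    by (cases "r \<le> c mod m") (auto simp: le_mod_geq)
qed

lemma mod_add_eq_left_mod:
  fixes c d k :: "'a::euclidean_semiring_cancel"
  assumes "d mod k = 0"
  shows "(c + d) mod k = c mod k"
  by (metis assms add.right_neutral mod_add_right_eq)

lemma count_list_replicate: "count_list (replicate k x) y = (if x = y then k else 0)"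
  by (induction k) auto

definition count_mod_lang :: "'a set \<Rightarrow> 'a \<Rightarrow> nat \<Rightarrow> 'a list set" where
  "count_mod_lang A b m = {w \<in> lists A. count_list w b mod m = 0}"

definition count_mod_class :: "'a set \<Rightarrow> 'a \<Rightarrow> nat \<Rightarrow> nat \<Rightarrow> 'a list set" where
  "count_mod_class A b m r = {v \<in> lists A. count_list v b mod m = r}"

lemma synt_equiv_count_mod_lang:
  assumes "b \<in> A" "0 < m" "u \<in> lists A" "v \<in> lists A"
  shows "synt_equiv A (count_mod_lang A b m) u v \<longleftrightarrow>
           count_list u b mod m = count_list v b mod m"
proof
  assume equiv: "synt_equiv A (count_mod_lang A b m) u v"
  define q where "q = replicate (m - count_list u b mod m) b"
  have q: "q \<in> lists A" "count_list q b = m - count_list u b mod m"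
    using \<open>b \<in> A\<close> by (auto simp: q_def count_list_replicate)
  have complement:
    "w @ q \<in> count_mod_lang A b m \<longleftrightarrow> count_list w b mod m = count_list u b mod m" if "w \<in> lists A" for w
  proof -
    have "w @ q \<in> count_mod_lang A b m \<longleftrightarrow> (count_list w b + count_list q b) mod m = 0"
      using that q(1) by (simp add: count_mod_lang_def)
    also have "\<dots> \<longleftrightarrow> count_list w b mod m = count_list u b mod m"
      unfolding q(2) by (rule add_complement_mod_eq_0_iff) (use \<open>0 < m\<close> in simp)
    finally show ?thesis .
  qed
  have "[] @ u @ q \<in> count_mod_lang A b m \<longleftrightarrow> [] @ v @ q \<in> count_mod_lang A b m"
    using equiv q(1) unfolding synt_equiv_def by blast
  then show "count_list u b mod m = count_list v b mod m"
    using complement assms(3,4) by simp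
next
  assume "count_list u b mod m = count_list v b mod m"
  then have "(count_list p b + count_list u b + count_list q b) mod m
               = (count_list p b + count_list v b + count_list q b) mod m" for p q
    by (metis mod_add_cong)
  then show "synt_equiv A (count_mod_lang A b m) u v"
    using assms by (auto simp: synt_equiv_def count_mod_lang_def add.assoc)
qed

lemma synt_hom_count_mod_lang:
  assumes "b \<in> A" "0 < m" "u \<in> lists A"
  shows "synt_hom A (count_mod_lang A b m) u = count_mod_class A b m (count_list u b mod m)"
  unfolding synt_hom_def count_mod_class_def
  using synt_equiv_count_mod_lang[OF assms] by (metis (lifting))

lemma synt_monoid_count_mod_lang:
  assumes "b \<in> A" "0 < m"
  shows "synt_monoid A (count_mod_lang A b m) = count_mod_class A b m ` {..<m}"
proof -
  have "r \<in> (\<lambda>u. count_list u b mod m) ` lists A" if "r < m" for r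
  proof
    show "r = count_list (replicate r b) b mod m" using that by (simp add: count_list_replicate)
  qed (use \<open>b \<in> A\<close> in auto)
  then have residues: "(\<lambda>u. count_list u b mod m) ` lists A = {..<m}"
    using \<open>0 < m\<close> by auto
  have "synt_monoid A (count_mod_lang A b m)
          = count_mod_class A b m ` (\<lambda>u. count_list u b mod m) ` lists A"
    unfolding synt_monoid_def image_image
    by (rule image_cong[OF refl synt_hom_count_mod_lang[OF assms]])
  then show ?thesis
    unfolding residues .
qed

lemma inj_on_count_mod_class:
  assumes "b \<in> A"
  shows "inj_on (count_mod_class A b m) {..<m}"
proof
  fix r s assume "r \<in> {..<m}" "s \<in> {..<m}" "count_mod_class A b m r = count_mod_class A b m s"
  moreover have "replicate r b \<in> count_mod_class A b m r"
    using assms \<open>r \<in> {..<m}\<close> by (auto simp: count_mod_class_def count_list_replicate)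
  ultimately show "r = s" by (auto simp: count_mod_class_def count_list_replicate)
qed

lemma card_synt_monoid_count_mod_lang:
  assumes "b \<in> A" "0 < m"
  shows "card (synt_monoid A (count_mod_lang A b m)) = m"
  using synt_monoid_count_mod_lang[OF assms] inj_on_count_mod_class[OF assms(1)]
  by (simp add: card_image)

lemma append_eq_append_Cons_iff:
  "xs @ ys = u' @ a # u'' \<longleftrightarrow>
     (\<exists>z. xs = u' @ a # z \<and> u'' = z @ ys) \<or> (\<exists>z. u' = xs @ z \<and> ys = z @ a # u'')"
  by (auto simp: append_eq_append_conv2 Cons_eq_append_conv append_eq_Cons_conv)

lemma pairs_of_factorizations_append:
  "{(f u', g u'') | u' u''. xs @ ys = u' @ a # u''}
     = {(f u', g (u'' @ ys)) | u' u''. xs = u' @ a # u''}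
       \<union> {(f (xs @ u'), g u'') | u' u''. ys = u' @ a # u''}"
  unfolding append_eq_append_Cons_iff by blast

lemma pairs_of_factorizations_single:
  assumes "a \<notin> set xs" "a \<notin> set ys"
  shows "{(f u', g u'') | u' u''. xs @ a # ys = u' @ a # u''} = {(f xs, g ys)}"
  using append_Cons_eq_iff[OF assms] by auto

lemma pairs_of_factorizations_cong:
  assumes "\<And>u' u''. w = u' @ a # u'' \<Longrightarrow> f u' = f' u' \<and> g u'' = g' u''"
  shows "{(f u', g u'') | u' u''. w = u' @ a # u''}
           = {(f' u', g' u'') | u' u''. w = u' @ a # u''}"
proof (intro Collect_cong iffI)
  fix P assume "\<exists>u' u''. P = (f u', g u'') \<and> w = u' @ a # u''"
  with assms show "\<exists>u' u''. P = (f' u', g' u'') \<and> w = u' @ a # u''" by metis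
next
  fix P assume "\<exists>u' u''. P = (f' u', g' u'') \<and> w = u' @ a # u''"
  with assms show "\<exists>u' u''. P = (f u', g u'') \<and> w = u' @ a # u''" by metis
qed

definition marker_profile :: "nat \<Rightarrow> nat \<Rightarrow> nat list \<Rightarrow> (nat \<times> nat) set" where
  "marker_profile m n w =
     {(count_list u' 1 mod m, count_list u'' 2 mod n) | u' u''. w = u' @ 0 # u''}"

lemma marker_profile_no_marker: "0 \<notin> set w \<Longrightarrow> marker_profile m n w = {}"
  by (auto simp: marker_profile_def)

lemma marker_profile_append:
  assumes "count_list xs 1 mod m = 0" "count_list ys 2 mod n = 0"
  shows "marker_profile m n (xs @ ys) = marker_profile m n xs \<union> marker_profile m n ys"
proof -
  have "(count_list u'' 2 + count_list ys 2) mod n = count_list u'' 2 mod n"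
    for u'' :: "nat list"
    by (rule mod_add_eq_left_mod[OF assms(2)])
  moreover have "(count_list xs 1 + count_list u' 1) mod m = count_list u' 1 mod m"
    for u' :: "nat list"
    using mod_add_eq_left_mod[OF assms(1)] by (simp add: add.commute)
  ultimately show ?thesis
    unfolding marker_profile_def pairs_of_factorizations_append by simp
qed

definition marker_block :: "nat \<Rightarrow> nat \<Rightarrow> nat \<Rightarrow> nat \<Rightarrow> nat list" where
  "marker_block m n p q =
     replicate (n - q) 2 @ replicate p 1 @ 0 # replicate q 2 @ replicate (m - p) 1"

lemma marker_block_in_lists: "marker_block m n p q \<in> lists {0, 1, 2}"
  by (auto simp: marker_block_def)

lemma count_list_marker_block:
  assumes "p < m" "q < n"
  shows "count_list (marker_block m n p q) 1 = m" "count_list (marker_block m n p q) 2 = n"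
  using assms by (simp_all add: marker_block_def count_list_replicate)

lemma marker_profile_marker_block:
  assumes "p < m" "q < n"
  shows "marker_profile m n (marker_block m n p q) = {(p, q)}"
proof -
  have "marker_profile m n (marker_block m n p q)
          = {(count_list (replicate (n - q) (2::nat) @ replicate p 1) 1 mod m,
              count_list (replicate q (2::nat) @ replicate (m - p) 1) 2 mod n)}"
    unfolding marker_profile_def marker_block_def append_assoc[symmetric]
    by (rule pairs_of_factorizations_single) auto
  then show ?thesis
    using assms by (simp add: count_list_replicate)
qed

lemma neutral_word_with_marker_profile:
  assumes "finite T" "T \<subseteq> {..<m} \<times> {..<n}"
  shows "\<exists>w \<in> lists {0, 1, 2}. count_list w 1 mod m = 0 \<and> count_list w 2 mod n = 0 \<and>
           marker_profile m n w = T"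
  using assms
proof (induction T rule: finite_induct)
  case empty
  show ?case by (intro bexI[of _ "[]"]) (auto simp: marker_profile_no_marker)
next
  case (insert pq T)
  obtain p q where pq: "pq = (p, q)" "p < m" "q < n"
    using insert.prems by auto
  have "T \<subseteq> {..<m} \<times> {..<n}"
    using insert.prems by simp
  then have "\<exists>w \<in> lists {0, 1, 2}. count_list w 1 mod m = 0 \<and> count_list w 2 mod n = 0 \<and>
               marker_profile m n w = T"
    by (rule insert.IH)
  then obtain w where w: "w \<in> lists {0, 1, 2}" "count_list w 1 mod m = 0"
    "count_list w 2 mod n = 0" "marker_profile m n w = T"
    by metis
  let ?W = "marker_block m n p q @ w"
  have "marker_profile m n ?W = insert pq T"
    using marker_profile_append[of "marker_block m n p q" m w n] w(3,4) pq
      count_list_marker_block[OF pq(2,3)] marker_profile_marker_block[OF pq(2,3)]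
    by simp
  moreover have "count_list ?W 1 mod m = 0" "count_list ?W 2 mod n = 0"
    using w(2,3) count_list_marker_block[OF pq(2,3)] by simp_all
  moreover have "?W \<in> lists {0, 1, 2}"
    using w(1) marker_block_in_lists by simp
  ultimately show ?case by (intro bexI[of _ ?W] conjI)
qed

lemma word_with_marker_profile:
  assumes "T \<subseteq> {..<m} \<times> {..<n}" "x < m" "y < n"
  shows "\<exists>w \<in> lists {0, 1, 2}. count_list w 1 mod m = x \<and> count_list w 2 mod n = y \<and>
           marker_profile m n w = T"
proof -
  have "finite T"
    using assms(1) by (rule finite_subset) auto
  then obtain w where w: "w \<in> lists {0, 1, 2}" "count_list w 1 mod m = 0"
    "count_list w 2 mod n = 0" "marker_profile m n w = T"
    using neutral_word_with_marker_profile[OF _ assms(1)] by metis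
  let ?W = "replicate y 2 @ w @ replicate x 1"
  have no_marker: "marker_profile m n (replicate k b) = {}" if "b \<noteq> 0" for k b
    using that by (simp add: marker_profile_no_marker)
  have "marker_profile m n (w @ replicate x 1) = T"
    using marker_profile_append[OF w(2), of "replicate x 1" n] w(4) no_marker
    by (simp add: count_list_replicate)
  then have profile: "marker_profile m n ?W = T"
    using marker_profile_append[of "replicate y 2" m "w @ replicate x 1" n] w(3) no_marker
    by (simp add: count_list_replicate)
  have "count_list ?W 1 = x + count_list w 1" "count_list ?W 2 = y + count_list w 2"
    by (simp_all add: count_list_replicate)
  then have "count_list ?W 1 mod m = x" "count_list ?W 2 mod n = y"
    using mod_add_eq_left_mod[OF w(2)] mod_add_eq_left_mod[OF w(3)] assms(2,3)
    by (simp_all add: add.commute)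
  moreover have "?W \<in> lists {0, 1, 2}"
    using w(1) by auto
  ultimately show ?thesis
    using profile by (intro bexI[of _ ?W] conjI)
qed

lemma mu_image_subset_schutz_carrier:
  "mu (synt_hom A K) (synt_hom A L) a ` lists A
     \<subseteq> schutz_carrier (synt_monoid A K) (synt_monoid A L)"
proof
  fix P assume "P \<in> mu (synt_hom A K) (synt_hom A L) a ` lists A"
  then obtain u where u: "u \<in> lists A" "P = mu (synt_hom A K) (synt_hom A L) a u" ..
  have "u' \<in> lists A \<and> u'' \<in> lists A" if "u = u' @ a # u''" for u' u''
    using u(1) that by simp
  then show "P \<in> schutz_carrier (synt_monoid A K) (synt_monoid A L)"
    using u unfolding mu_def schutz_carrier_def synt_monoid_def by blast
qed

lemma mu_count_mod_langs:
  fixes A :: "nat set"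
  assumes "0 < m" "0 < n" "1 \<in> A" "2 \<in> A" "u \<in> lists A"
  shows "mu (synt_hom A (count_mod_lang A 1 m)) (synt_hom A (count_mod_lang A 2 n)) 0 u
           = (count_mod_class A 1 m (count_list u 1 mod m),
              (\<lambda>(p, q). (count_mod_class A 1 m p, count_mod_class A 2 n q)) ` marker_profile m n u,
              count_mod_class A 2 n (count_list u 2 mod n))"
proof -
  note hom_K = synt_hom_count_mod_lang[OF assms(3,1)]
  note hom_L = synt_hom_count_mod_lang[OF assms(4,2)]
  have sublists: "u' \<in> lists A" "u'' \<in> lists A" if "u = u' @ 0 # u''" for u' u''
    using assms(5) that by simp_all
  have "{(synt_hom A (count_mod_lang A 1 m) u', synt_hom A (count_mod_lang A 2 n) u'') | u' u''.
           u = u' @ 0 # u''}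
        = {(count_mod_class A 1 m (count_list u' 1 mod m),
            count_mod_class A 2 n (count_list u'' 2 mod n)) | u' u''. u = u' @ 0 # u''}"
    by (rule pairs_of_factorizations_cong) (use hom_K hom_L sublists in simp)
  also have "\<dots> = (\<lambda>(p, q). (count_mod_class A 1 m p, count_mod_class A 2 n q))
                        ` marker_profile m n u"
    unfolding marker_profile_def by force
  finally show ?thesis
    unfolding mu_def hom_K[OF assms(5)] hom_L[OF assms(5)] by simp
qed

lemma schutz_carrier_subset_mu_image:
  fixes A :: "nat set"
  assumes "0 < m" "0 < n" "{0, 1, 2} \<subseteq> A"
  shows "schutz_carrier (synt_monoid A (count_mod_lang A 1 m))
                        (synt_monoid A (count_mod_lang A 2 n))
           \<subseteq> mu (synt_hom A (count_mod_lang A 1 m)) (synt_hom A (count_mod_lang A 2 n)) 0 ` lists A"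
proof
  let ?K = "count_mod_class A 1 m" and ?L = "count_mod_class A 2 n"
  have A: "1 \<in> A" "2 \<in> A" "lists {0, 1, 2} \<subseteq> lists A"
    using assms(3) by (auto intro: lists_mono)
  note monoid_K = synt_monoid_count_mod_lang[OF A(1) assms(1)]
  note monoid_L = synt_monoid_count_mod_lang[OF A(2) assms(2)]
  fix P assume "P \<in> schutz_carrier (synt_monoid A (count_mod_lang A 1 m))
                                 (synt_monoid A (count_mod_lang A 2 n))"
  then obtain X S Y where "P = (X, S, Y)" "X \<in> ?K ` {..<m}" "Y \<in> ?L ` {..<n}"
    and S: "S \<subseteq> (\<lambda>(p, q). (?K p, ?L q)) ` ({..<m} \<times> {..<n})"
    unfolding schutz_carrier_def monoid_K monoid_L image_paired_Times by blast
  then obtain x y where P: "P = (?K x, S, ?L y)" "x < m" "y < n"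
    by blast
  obtain T where T: "T \<subseteq> {..<m} \<times> {..<n}" "S = (\<lambda>(p, q). (?K p, ?L q)) ` T"
    using S by (auto simp: subset_image_iff)
  obtain w where w: "w \<in> lists {0, 1, 2}" "count_list w 1 mod m = x" "count_list w 2 mod n = y"
    "marker_profile m n w = T"
    using word_with_marker_profile[OF T(1) P(2,3)] by metis
  have "w \<in> lists A"
    using w(1) A(3) by blast
  moreover have "mu (synt_hom A (count_mod_lang A 1 m)) (synt_hom A (count_mod_lang A 2 n)) 0 w = P"
    unfolding mu_count_mod_langs[OF assms(1,2) A(1,2) \<open>w \<in> lists A\<close>] w(2-4) T(2) P(1) ..
  ultimately show
    "P \<in> mu (synt_hom A (count_mod_lang A 1 m)) (synt_hom A (count_mod_lang A 2 n)) 0 ` lists A"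
    by (rule rev_image_eqI[OF _ sym])
qed

theorem proposition3:
  fixes m n :: nat
  assumes "m > 0" and "n > 0"
  shows "\<exists>(A :: nat set) a K L.
           finite A \<and> a \<in> A \<and> K \<subseteq> lists A \<and> L \<subseteq> lists A \<and>
           card (synt_monoid A K) = m \<and> card (synt_monoid A L) = n \<and>
           mu (synt_hom A K) (synt_hom A L) a ` lists A
             = schutz_carrier (synt_monoid A K) (synt_monoid A L)"
proof (intro exI conjI)
  let ?A = "{0, 1, 2} :: nat set"
  show "finite ?A" "0 \<in> ?A" by simp_all
  show "count_mod_lang ?A 1 m \<subseteq> lists ?A" "count_mod_lang ?A 2 n \<subseteq> lists ?A"
    by (auto simp: count_mod_lang_def)
  show "card (synt_monoid ?A (count_mod_lang ?A 1 m)) = m"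
    "card (synt_monoid ?A (count_mod_lang ?A 2 n)) = n"
    using assms by (simp_all add: card_synt_monoid_count_mod_lang)
  show "mu (synt_hom ?A (count_mod_lang ?A 1 m)) (synt_hom ?A (count_mod_lang ?A 2 n)) 0 ` lists ?A
          = schutz_carrier (synt_monoid ?A (count_mod_lang ?A 1 m))
                           (synt_monoid ?A (count_mod_lang ?A 2 n))"
    using mu_image_subset_schutz_carrier schutz_carrier_subset_mu_image[OF assms order_refl]
    by (rule subset_antisym)
qed

end
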